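(* For each fixed $d\in\mathbb{N}$, collinearity of three $d$-dimensional points with $n$-bit natural-number coordinates can be maintained in $\mathrm{DynFO}{+}\mathrm{ar}$ under changes of single bits.
   Context: Input: three points $p_1,p_2,p_3\in\mathbb{N}^d$ whose coordinates are $n$-bit numbers, encoded over a domain $[n]$ by relations recording which bits of which coordinates are $1$; a change flips a single bit of a single coordinate. The Boolean query asks whether $p_1,p_2,p_3$ lie on a common line. $\mathrm{FO}{+}\mathrm{ar}$: first-order logic with access to a linear order and compatible addition and multiplication on the domain, order-invariant. A query is in $\mathrm{DynFO}{+}\mathrm{ar}$ under a set of changes if there is a dynamic program, with auxiliary relations over the fixed domain and one $\mathrm{FO}{+}\mathrm{ar}$ update formula per change operation and auxiliary relation (evaluated on the old input and auxiliary structure, with the change parameters as free variables), which, starting from the empty input (all bits $0$) with empty auxiliary relations, has after every sequence of changes a query relation equal to the query answer on the current input. *)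

theory Defs
  imports "HOL-Analysis.Analysis"
begin

datatype 'r fo =
    Rel 'r "nat list"
  | Eq nat nat
  | Less nat nat
  | Plus nat nat nat
  | Times nat nat nat
  | Neg "'r fo"
  | Conj "'r fo" "'r fo"
  | Ex nat "'r fo"

fun sat :: "nat \<Rightarrow> ('r \<Rightarrow> nat list set) \<Rightarrow> 'r fo \<Rightarrow> (nat \<Rightarrow> nat) \<Rightarrow> bool" where
  "sat n I (Rel r xs) v = (map v xs \<in> I r)"
| "sat n I (Eq x y) v = (v x = v y)"
| "sat n I (Less x y) v = (v x < v y)"
| "sat n I (Plus x y z) v = (v x + v y = v z)"
| "sat n I (Times x y z) v = (v x * v y = v z)"
| "sat n I (Neg \<phi>) v = (\<not> sat n I \<phi> v)"
| "sat n I (Conj \<phi> \<psi>) v = (sat n I \<phi> v \<and> sat n I \<psi> v)"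
| "sat n I (Ex x \<phi>) v = (\<exists>a<n. sat n I \<phi> (v(x := a)))"

datatype pt = P1 | P2 | P3

text \<open>The input consists of unary relations, one for each (point, coordinate) pair, recording
  which bits (domain elements, bit k = element k, least significant bit = 0) are 1.
  The coordinate index type 'd is a finite type with CARD('d) = d.\<close>

type_synonym 'd input = "pt \<times> 'd \<Rightarrow> nat set"

definition coord :: "'d input \<Rightarrow> pt \<Rightarrow> 'd \<Rightarrow> nat" where
  "coord I p j = (\<Sum>k\<in>I (p, j). 2 ^ k)"

definition point :: "'d input \<Rightarrow> pt \<Rightarrow> real ^ 'd" where
  "point I p = (\<chi> j. real (coord I p j))"

type_synonym 'd change = "(pt \<times> 'd) \<times> nat"

definition flip :: "'d input \<Rightarrow> 'd change \<Rightarrow> 'd input" where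
  "flip I c = (case c of (s, a) \<Rightarrow> I(s := (if a \<in> I s then I s - {a} else insert a (I s))))"

text \<open>Auxiliary relation symbols are 0..<naux, symbol r has arity (arity r); symbol 0 is the
  0-ary query relation. The update formula upd s r for change operation "flip a bit of s"
  and auxiliary relation r is evaluated over the combined vocabulary (input symbols Inl,
  auxiliary symbols Inr) on the OLD structure; variable 0 is the change parameter a and
  variables 1..arity r are the components of the tuple being defined.\<close>

record 'd dynprog =
  naux :: nat
  arity :: "nat \<Rightarrow> nat"
  upd :: "pt \<times> 'd \<Rightarrow> nat \<Rightarrow> (pt \<times> 'd + nat) fo"

definition wf_prog :: "'d dynprog \<Rightarrow> bool" where
  "wf_prog P \<longleftrightarrow> 0 < naux P \<and> arity P 0 = 0"

type_synonym aux = "nat \<Rightarrow> nat list set"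

definition interp :: "'d input \<Rightarrow> aux \<Rightarrow> (pt \<times> 'd + nat) \<Rightarrow> nat list set" where
  "interp I A = (\<lambda>R. case R of Inl s \<Rightarrow> {[a] | a. a \<in> I s} | Inr r \<Rightarrow> A r)"

definition env :: "nat \<Rightarrow> nat list \<Rightarrow> nat \<Rightarrow> nat" where
  "env a t = (\<lambda>x. if x = 0 then a else if x \<le> length t then t ! (x - 1) else 0)"

definition step :: "nat \<Rightarrow> 'd dynprog \<Rightarrow> 'd input \<times> aux \<Rightarrow> 'd change \<Rightarrow> 'd input \<times> aux" where
  "step n P st c = (case st of (I, A) \<Rightarrow> case c of (s, a) \<Rightarrow>
     (flip I (s, a),
      \<lambda>r. if r < naux P then
             {t. length t = arity P r \<and> set t \<subseteq> {..<n} \<and>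
                 sat n (interp I A) (upd P s r) (env a t)}
           else {}))"

definition run :: "nat \<Rightarrow> 'd dynprog \<Rightarrow> 'd change list \<Rightarrow> 'd input \<times> aux" where
  "run n P cs = foldl (step n P) (\<lambda>_. {}, \<lambda>_. {}) cs"

definition maintains :: "'d dynprog \<Rightarrow> (nat \<Rightarrow> 'd input \<Rightarrow> bool) \<Rightarrow> bool" where
  "maintains P Q \<longleftrightarrow> (\<forall>n cs. cs \<noteq> [] \<and> (\<forall>c\<in>set cs. snd c < n) \<longrightarrow>
      ([] \<in> snd (run n P cs) 0 \<longleftrightarrow> Q n (fst (run n P cs))))"

definition in_DynFO_ar :: "(nat \<Rightarrow> 'd input \<Rightarrow> bool) \<Rightarrow> bool" where
  "in_DynFO_ar Q \<longleftrightarrow> (\<exists>P::'d dynprog. wf_prog P \<and> maintains P Q)"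

definition collinear_query :: "nat \<Rightarrow> ('d::finite) input \<Rightarrow> bool" where
  "collinear_query n I = collinear {point I P1, point I P2, point I P3}"

end

theory Submission
  imports Defs
begin

text \<open>For every pair \<open>i, j\<close> of coordinates the auxiliary relations store the minor
  \<open>(p2_i - p1_i) (p3_j - p1_j) - (p2_j - p1_j) (p3_i - p1_i)\<close> redundantly, as two bit strings
  \<open>u, v\<close> of length \<open>5 n\<close> with \<open>u + v\<close> congruent to the minor modulo \<open>2 ^ (5 n)\<close>; the points
  are collinear iff all minors vanish. Flipping bit \<open>a\<close> of one coordinate changes a minor by
  \<open>\<plusminus>2 ^ a\<close> times a signed sum of a few other coordinates, so the new pair arises from the old one
  by a bounded number of carry-save additions, which are bitwise and hence first-order. As
  the minors are smaller than \<open>2 ^ (5 n)\<close> in absolute value, a minor is zero iff \<open>u + v\<close>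
  vanishes modulo \<open>2 ^ (5 n)\<close>, which is again first-order: the bits of \<open>u\<close> and \<open>v\<close> must
  differ exactly at the positions above the lowest bit set in either string.\<close>

section \<open>Bit strings and carry-save addition\<close>

definition bin_val :: "(nat \<Rightarrow> bool) \<Rightarrow> nat \<Rightarrow> int" where
  "bin_val b M = (\<Sum>p<M. if b p then 2 ^ p else 0)"

lemma bin_val_0 [simp]: "bin_val b 0 = 0"
  by (simp add: bin_val_def)

lemma bin_val_Suc: "bin_val b (Suc M) = bin_val b M + (if b M then 2 ^ M else 0)"
  by (simp add: bin_val_def)

lemma bin_val_nonneg: "0 \<le> bin_val b M"
  by (induction M) (auto simp: bin_val_Suc)

lemma bin_val_less: "bin_val b M < 2 ^ M"
proof (induction M)
  case (Suc M)
  have "bin_val b (Suc M) \<le> bin_val b M + 2 ^ M"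
    by (simp add: bin_val_Suc)
  then show ?case
    using Suc.IH by simp
qed simp

lemma bin_val_cong: "(\<And>p. p < M \<Longrightarrow> b p = c p) \<Longrightarrow> bin_val b M = bin_val c M"
  unfolding bin_val_def by (rule sum.cong) auto

lemma bin_val_False [simp]: "bin_val (\<lambda>p. False) M = 0"
  by (simp add: bin_val_def)

lemma bin_val_not: "bin_val (\<lambda>p. \<not> b p) M = 2 ^ M - 1 - bin_val b M"
  by (induction M) (auto simp: bin_val_Suc)

lemma bin_val_set:
  assumes "S \<subseteq> {..<M}"
  shows "bin_val (\<lambda>p. p \<in> S) M = (\<Sum>k\<in>S. 2 ^ k)"
proof -
  have "bin_val (\<lambda>p. p \<in> S) M = (\<Sum>p\<in>{..<M} \<inter> S. 2 ^ p)"
    unfolding bin_val_def by (simp add: sum.inter_restrict[symmetric] if_distrib)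
  also have "{..<M} \<inter> S = S"
    using assms by auto
  finally show ?thesis .
qed

lemma bin_val_set_shift:
  assumes "finite S" "\<forall>l\<in>S. a + l < M"
  shows "bin_val (\<lambda>p. p \<in> (+) a ` S) M = 2 ^ a * (\<Sum>l\<in>S. 2 ^ l)"
proof -
  have "bin_val (\<lambda>p. p \<in> (+) a ` S) M = (\<Sum>l\<in>S. 2 ^ (a + l))"
    using assms by (subst bin_val_set) (auto simp: sum.reindex)
  then show ?thesis
    by (simp add: power_add sum_distrib_left)
qed

definition shift_in :: "bool \<Rightarrow> (nat \<Rightarrow> bool) \<Rightarrow> nat \<Rightarrow> bool" where
  "shift_in c b p = (if p = 0 then c else b (p - 1))"

lemma bin_val_shift_in: "bin_val (shift_in c b) (Suc M) = of_bool c + 2 * bin_val b M"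
  by (induction M) (auto simp: bin_val_Suc shift_in_def)

definition xor3 :: "bool \<Rightarrow> bool \<Rightarrow> bool \<Rightarrow> bool" where
  "xor3 x y z \<longleftrightarrow> x \<noteq> (y \<noteq> z)"

definition maj3 :: "bool \<Rightarrow> bool \<Rightarrow> bool \<Rightarrow> bool" where
  "maj3 x y z \<longleftrightarrow> (x \<and> y) \<or> (x \<and> z) \<or> (y \<and> z)"

lemma bin_val_full_adder:
  "bin_val (\<lambda>p. xor3 (u p) (v p) (w p)) M + 2 * bin_val (\<lambda>p. maj3 (u p) (v p) (w p)) M
   = bin_val u M + bin_val v M + bin_val w M"
  by (induction M) (auto simp: bin_val_Suc xor3_def maj3_def)

definition carry_save ::
    "bool \<Rightarrow> (nat \<Rightarrow> bool) \<times> (nat \<Rightarrow> bool) \<Rightarrow> (nat \<Rightarrow> bool) \<Rightarrow> (nat \<Rightarrow> bool) \<times> (nat \<Rightarrow> bool)" where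
  "carry_save c uv w =
     (\<lambda>p. xor3 (fst uv p) (snd uv p) (w p), shift_in c (\<lambda>p. maj3 (fst uv p) (snd uv p) (w p)))"

lemma bin_val_carry_save:
  assumes "0 < M"
  shows "(bin_val (fst (carry_save c uv w)) M + bin_val (snd (carry_save c uv w)) M) mod 2 ^ M
       = (bin_val (fst uv) M + bin_val (snd uv) M + bin_val w M + of_bool c) mod 2 ^ M"
proof -
  obtain M' where M: "M = Suc M'"
    using assms by (cases M) auto
  let ?m = "\<lambda>p. maj3 (fst uv p) (snd uv p) (w p)"
  define top :: int where "top = of_bool (?m M')"
  have "2 * bin_val ?m M = 2 * bin_val ?m M' + top * 2 ^ M"
    by (simp add: M bin_val_Suc top_def)
  then have "bin_val (fst (carry_save c uv w)) M + bin_val (snd (carry_save c uv w)) M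
      = bin_val (fst uv) M + bin_val (snd uv) M + bin_val w M + of_bool c + (- top) * 2 ^ M"
    using bin_val_full_adder[of "fst uv" "snd uv" w M] bin_val_shift_in[of c ?m M']
    unfolding carry_save_def M[symmetric] by (simp add: algebra_simps)
  then show ?thesis
    by (metis mod_mult_self1)
qed

definition carry_pattern :: "(nat \<Rightarrow> bool) \<Rightarrow> (nat \<Rightarrow> bool) \<Rightarrow> nat \<Rightarrow> bool" where
  "carry_pattern u v M \<longleftrightarrow> (\<forall>q<M. (u q \<noteq> v q) \<longleftrightarrow> (\<exists>r<q. u r \<or> v r))"

lemma carry_pattern_Suc:
  "carry_pattern u v (Suc M) \<longleftrightarrow> carry_pattern u v M \<and> ((u M \<noteq> v M) \<longleftrightarrow> (\<exists>r<M. u r \<or> v r))"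
  by (auto simp: carry_pattern_def less_Suc_eq)

lemma bin_val_add_if_carry_pattern:
  "carry_pattern u v M \<Longrightarrow>
   bin_val u M + bin_val v M = (if \<exists>r<M. u r \<or> v r then 2 ^ M else 0)"
proof (induction M)
  case (Suc M)
  then have "bin_val u M + bin_val v M = (if \<exists>r<M. u r \<or> v r then 2 ^ M else 0)"
    and "(u M \<noteq> v M) \<longleftrightarrow> (\<exists>r<M. u r \<or> v r)"
    by (simp_all add: carry_pattern_Suc)
  then show ?case
    by (auto simp: bin_val_Suc less_Suc_eq)
qed simp

text \<open>The sum of two bit strings vanishes modulo \<open>2 ^ M\<close> iff at every position the
  incoming carry, which is set exactly when some lower bit is set, makes the two bits cancel.\<close>

lemma two_pow_dvd_bin_val_add_iff:
  "(2 ^ M dvd bin_val u M + bin_val v M) \<longleftrightarrow> carry_pattern u v M"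
proof (induction M)
  case (Suc M)
  define S where "S = bin_val u M + bin_val v M"
  define t :: int where "t = (if u M then 1 else 0) + (if v M then 1 else 0)"
  have S': "bin_val u (Suc M) + bin_val v (Suc M) = S + t * 2 ^ M"
    by (simp add: S_def t_def bin_val_Suc algebra_simps)
  show ?case
  proof (cases "carry_pattern u v M")
    case True
    define e :: int where "e = (if \<exists>r<M. u r \<or> v r then 1 else 0)"
    have "S = e * 2 ^ M"
      using bin_val_add_if_carry_pattern[OF True] by (simp add: S_def e_def)
    then have "bin_val u (Suc M) + bin_val v (Suc M) = 2 ^ M * (e + t)"
      using S' by (simp add: algebra_simps)
    then have "(2 ^ Suc M dvd bin_val u (Suc M) + bin_val v (Suc M)) \<longleftrightarrow> 2 dvd e + t"
      by (simp add: mult.commute[of 2])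
    also have "\<dots> \<longleftrightarrow> ((u M \<noteq> v M) \<longleftrightarrow> (\<exists>r<M. u r \<or> v r))"
      by (simp add: e_def t_def)
    finally show ?thesis
      using True by (simp add: carry_pattern_Suc)
  next
    case False
    then have "\<not> 2 ^ M dvd S + t * 2 ^ M"
      using Suc.IH by (simp add: S_def dvd_add_left_iff)
    then have "\<not> 2 ^ Suc M dvd bin_val u (Suc M) + bin_val v (Suc M)"
      unfolding S' by (metis dvd_mult_right power_Suc)
    then show ?thesis
      using False by (simp add: carry_pattern_Suc)
  qed
qed (simp add: carry_pattern_def)

lemma dvd_iff_zero_if_mod_eq:
  fixes x y m :: int
  assumes "x mod m = y mod m" "\<bar>y\<bar> < m"
  shows "m dvd x \<longleftrightarrow> y = 0"
proof -
  have "m dvd x \<longleftrightarrow> m dvd y"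
    using assms(1) by (simp add: dvd_eq_mod_eq_0)
  also have "\<dots> \<longleftrightarrow> y = 0"
    using assms(2) dvd_imp_le_int[of y m] by auto
  finally show ?thesis .
qed

definition Truth :: "'r fo" where
  "Truth = Eq 0 0"

definition Disj :: "'r fo \<Rightarrow> 'r fo \<Rightarrow> 'r fo" where
  "Disj \<phi> \<psi> = Neg (Conj (Neg \<phi>) (Neg \<psi>))"

definition Xor :: "'r fo \<Rightarrow> 'r fo \<Rightarrow> 'r fo" where
  "Xor \<phi> \<psi> = Disj (Conj \<phi> (Neg \<psi>)) (Conj (Neg \<phi>) \<psi>)"

definition Ite :: "'r fo \<Rightarrow> 'r fo \<Rightarrow> 'r fo \<Rightarrow> 'r fo" where
  "Ite \<theta> \<phi> \<psi> = Disj (Conj \<theta> \<phi>) (Conj (Neg \<theta>) \<psi>)"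

definition Const :: "bool \<Rightarrow> 'r fo" where
  "Const b = (if b then Truth else Neg Truth)"

fun Conjs :: "'r fo list \<Rightarrow> 'r fo" where
  "Conjs [] = Truth"
| "Conjs (\<phi> # \<phi>s) = Conj \<phi> (Conjs \<phi>s)"

fun Disjs :: "'r fo list \<Rightarrow> 'r fo" where
  "Disjs [] = Neg Truth"
| "Disjs (\<phi> # \<phi>s) = Disj \<phi> (Disjs \<phi>s)"

lemma sat_Truth [simp]: "sat n J Truth v"
  by (simp add: Truth_def)

lemma sat_Disj [simp]: "sat n J (Disj \<phi> \<psi>) v \<longleftrightarrow> sat n J \<phi> v \<or> sat n J \<psi> v"
  by (simp add: Disj_def)

lemma sat_Xor [simp]: "sat n J (Xor \<phi> \<psi>) v \<longleftrightarrow> sat n J \<phi> v \<noteq> sat n J \<psi> v"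
  by (auto simp: Xor_def)

lemma sat_Ite [simp]:
  "sat n J (Ite \<theta> \<phi> \<psi>) v = (if sat n J \<theta> v then sat n J \<phi> v else sat n J \<psi> v)"
  by (simp add: Ite_def)

lemma sat_Const [simp]: "sat n J (Const b) v = b"
  by (simp add: Const_def)

lemma sat_Conjs [simp]: "sat n J (Conjs \<phi>s) v \<longleftrightarrow> (\<forall>\<phi>\<in>set \<phi>s. sat n J \<phi> v)"
  by (induction \<phi>s) auto

lemma sat_Disjs [simp]: "sat n J (Disjs \<phi>s) v \<longleftrightarrow> (\<exists>\<phi>\<in>set \<phi>s. sat n J \<phi> v)"
  by (induction \<phi>s) auto

definition IsSucc :: "nat \<Rightarrow> nat \<Rightarrow> nat \<Rightarrow> 'r fo" where
  "IsSucc y x z = Conj (Less y x) (Neg (Ex z (Conj (Less y z) (Less z x))))"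

definition IsZero :: "nat \<Rightarrow> nat \<Rightarrow> 'r fo" where
  "IsZero x z = Neg (Ex z (Less z x))"

definition IsLast :: "nat \<Rightarrow> nat \<Rightarrow> 'r fo" where
  "IsLast x z = Neg (Ex z (Less x z))"

lemma succ_iff_no_between:
  assumes "(x::nat) < n"
  shows "(y < x \<and> \<not> (\<exists>z<n. y < z \<and> z < x)) \<longleftrightarrow> y + 1 = x"
proof
  assume "y < x \<and> \<not> (\<exists>z<n. y < z \<and> z < x)"
  then show "y + 1 = x"
    using assms less_trans[of "Suc y" x n] by (metis Suc_eq_plus1 Suc_lessI lessI)
qed auto

lemma last_iff_no_above: "(m::nat) < n \<Longrightarrow> \<not> (\<exists>z<n. m < z) \<longleftrightarrow> m + 1 = n"
  by (cases "Suc m < n") auto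

lemma sat_IsSucc:
  "z \<noteq> y \<Longrightarrow> z \<noteq> x \<Longrightarrow> v x < n \<Longrightarrow> sat n J (IsSucc y x z) v \<longleftrightarrow> v y + 1 = v x"
  unfolding IsSucc_def using succ_iff_no_between[of "v x" n "v y"] by simp

lemma sat_IsZero: "z \<noteq> x \<Longrightarrow> v x < n \<Longrightarrow> sat n J (IsZero x z) v \<longleftrightarrow> v x = 0"
  unfolding IsZero_def by auto

lemma sat_IsLast: "z \<noteq> x \<Longrightarrow> v x < n \<Longrightarrow> sat n J (IsLast x z) v \<longleftrightarrow> v x + 1 = n"
  unfolding IsLast_def using last_iff_no_above[of "v x" n] by simp

text \<open>\<open>Overflow l x k\<close> says \<open>v 0 + v l = n + v x\<close> without leaving the domain: it asks for
  \<open>d\<close> with \<open>v x + d + 1 = v 0\<close> and \<open>v l + d = n - 1\<close>.\<close>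

definition Overflow :: "nat \<Rightarrow> nat \<Rightarrow> nat \<Rightarrow> 'r fo" where
  "Overflow l x k =
     Ex k (Conj (Plus x k 0)
       (Ex (Suc k) (Conj (IsSucc (Suc k) k (Suc (Suc (Suc k))))
         (Ex (Suc (Suc k)) (Conj (IsLast (Suc (Suc k)) (Suc (Suc (Suc k))))
           (Plus l (Suc k) (Suc (Suc k))))))))"

lemma overflow_iff:
  fixes a b c n :: nat
  assumes "a < n" "b < n" "c < n"
  shows "(\<exists>e<n. c + e = a \<and> (\<exists>d<n. d + 1 = e \<and> (\<exists>m<n. m + 1 = n \<and> b + d = m)))
     \<longleftrightarrow> a + b = n + c"
proof
  assume sum: "a + b = n + c"
  then have "c + (a - c) = a" "(a - c - 1) + 1 = a - c" "(n - 1) + 1 = n" "b + (a - c - 1) = n - 1"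
    and "a - c < n" "a - c - 1 < n" "n - 1 < n"
    using assms by linarith+
  then show "\<exists>e<n. c + e = a \<and> (\<exists>d<n. d + 1 = e \<and> (\<exists>m<n. m + 1 = n \<and> b + d = m))"
    by blast
qed auto

lemma sat_Overflow:
  assumes "0 < l" "l < k" "0 < x" "x < k" "v 0 < n" "v l < n" "v x < n"
  shows "sat n J (Overflow l x k) v \<longleftrightarrow> v 0 + v l = n + v x"
proof -
  have "sat n J (Overflow l x k) v \<longleftrightarrow>
      (\<exists>e<n. v x + e = v 0 \<and> (\<exists>d<n. d + 1 = e \<and> (\<exists>m<n. m + 1 = n \<and> v l + d = m)))"
    using assms by (auto simp: Overflow_def sat_IsSucc sat_IsLast)
  also have "\<dots> \<longleftrightarrow> v 0 + v l = n + v x"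
    using assms(5-7) by (rule overflow_iff)
  finally show ?thesis .
qed

section \<open>Formulas defining bit strings\<close>

text \<open>Numbers are stored as bit strings of length \<open>nblocks * n\<close>, cut into blocks of \<open>n\<close> bits
  that are indexed by domain elements. Five blocks leave room for the \<open>2 \<times> 2\<close> minors of the
  coordinates, whose absolute values stay below \<open>3 * 4 ^ n\<close>.\<close>

definition nblocks :: nat where
  "nblocks = 5"

type_synonym 'r bits_fo = "nat \<Rightarrow> nat \<Rightarrow> nat \<Rightarrow> 'r fo"

text \<open>\<open>F k t x\<close> defines bit \<open>t * n + v x\<close> of the bit string \<open>b (v 0)\<close>, which may depend on the
  change parameter in variable \<open>0\<close>; besides \<open>0\<close> and \<open>x\<close>, the formula uses only variables from
  \<open>k\<close> on, so that nested families never capture each other's variables.\<close>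

definition defines_bits ::
    "nat \<Rightarrow> ('r \<Rightarrow> nat list set) \<Rightarrow> 'r bits_fo \<Rightarrow> (nat \<Rightarrow> nat \<Rightarrow> bool) \<Rightarrow> bool" where
  "defines_bits n J F b \<longleftrightarrow> (\<forall>k t x v. 0 < x \<longrightarrow> x < k \<longrightarrow> t < nblocks \<longrightarrow> v 0 < n \<longrightarrow> v x < n \<longrightarrow>
      sat n J (F k t x) v = b (v 0) (t * n + v x))"

lemma defines_bitsD:
  "defines_bits n J F b \<Longrightarrow> 0 < x \<Longrightarrow> x < k \<Longrightarrow> t < nblocks \<Longrightarrow> v 0 < n \<Longrightarrow> v x < n \<Longrightarrow>
   sat n J (F k t x) v = b (v 0) (t * n + v x)"
  unfolding defines_bits_def by blast

lemma defines_bits_upd: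
  "defines_bits n J F b \<Longrightarrow> 0 < x \<Longrightarrow> x < k \<Longrightarrow> t < nblocks \<Longrightarrow> v 0 < n \<Longrightarrow> y < n \<Longrightarrow>
   sat n J (F k t x) (v(x := y)) = b (v 0) (t * n + y)"
  using defines_bitsD[of n J F b x k t "v(x := y)"] by simp

lemma sat_Ex_bits:
  assumes "defines_bits n J G g" "0 < k" "t < nblocks" "v 0 < n"
  shows "sat n J (Ex k (Conj \<phi> (G (Suc k) t k))) v \<longleftrightarrow> (\<exists>y<n. sat n J \<phi> (v(k := y)) \<and> g (v 0) (t * n + y))"
  using defines_bits_upd[of n J G g k "Suc k" t v] assms by auto

definition Xor3_bits :: "'r bits_fo \<Rightarrow> 'r bits_fo \<Rightarrow> 'r bits_fo \<Rightarrow> 'r bits_fo" where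
  "Xor3_bits F G H = (\<lambda>k t x. Xor (F k t x) (Xor (G k t x) (H k t x)))"

definition Maj3_bits :: "'r bits_fo \<Rightarrow> 'r bits_fo \<Rightarrow> 'r bits_fo \<Rightarrow> 'r bits_fo" where
  "Maj3_bits F G H = (\<lambda>k t x. Disj (Conj (F k t x) (G k t x))
      (Disj (Conj (F k t x) (H k t x)) (Conj (G k t x) (H k t x))))"

definition Not_bits :: "'r bits_fo \<Rightarrow> 'r bits_fo" where
  "Not_bits F = (\<lambda>k t x. Neg (F k t x))"

definition Ite_bits :: "'r fo \<Rightarrow> 'r bits_fo \<Rightarrow> 'r bits_fo \<Rightarrow> 'r bits_fo" where
  "Ite_bits \<theta> F G = (\<lambda>k t x. Ite \<theta> (F k t x) (G k t x))"

definition ShiftIn_bits :: "bool \<Rightarrow> 'r bits_fo \<Rightarrow> 'r bits_fo" where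
  "ShiftIn_bits c G = (\<lambda>k t x.
     Ite (IsZero x k)
       (if t = 0 then Const c else Ex k (Conj (IsLast k (Suc k)) (G (Suc k) (t - 1) k)))
       (Ex k (Conj (IsSucc k x (Suc k)) (G (Suc k) t k))))"

lemma defines_bits_Xor3:
  "defines_bits n J F f \<Longrightarrow> defines_bits n J G g \<Longrightarrow> defines_bits n J H h \<Longrightarrow>
   defines_bits n J (Xor3_bits F G H) (\<lambda>a p. xor3 (f a p) (g a p) (h a p))"
  unfolding defines_bits_def Xor3_bits_def xor3_def by simp

lemma defines_bits_Maj3:
  "defines_bits n J F f \<Longrightarrow> defines_bits n J G g \<Longrightarrow> defines_bits n J H h \<Longrightarrow>
   defines_bits n J (Maj3_bits F G H) (\<lambda>a p. maj3 (f a p) (g a p) (h a p))"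
  unfolding defines_bits_def Maj3_bits_def maj3_def by simp

lemma defines_bits_Not:
  "defines_bits n J F f \<Longrightarrow> defines_bits n J (Not_bits F) (\<lambda>a p. \<not> f a p)"
  unfolding defines_bits_def Not_bits_def by simp

lemma defines_bits_Ite:
  "(\<And>v. sat n J \<theta> v \<longleftrightarrow> P (v 0)) \<Longrightarrow> defines_bits n J F f \<Longrightarrow> defines_bits n J G g \<Longrightarrow>
   defines_bits n J (Ite_bits \<theta> F G) (\<lambda>a p. if P a then f a p else g a p)"
  unfolding defines_bits_def Ite_bits_def by simp

lemma shift_in_block:
  assumes "y < n"
  shows "shift_in c b (t * n + y) =
    (if y = 0 then (if t = 0 then c else b ((t - 1) * n + (n - 1))) else b (t * n + (y - 1)))"
proof (cases "y = 0 \<and> t \<noteq> 0")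
  case True
  then have "t * n + y - 1 = (t - 1) * n + (n - 1)"
    using assms by (cases t) auto
  then show ?thesis
    using True assms by (simp add: shift_in_def)
qed (use assms in \<open>auto simp: shift_in_def\<close>)

lemma sat_Ex_IsLast_bits:
  assumes "defines_bits n J G g" "0 < k" "t < nblocks" "v 0 < n"
  shows "sat n J (Ex k (Conj (IsLast k (Suc k)) (G (Suc k) t k))) v \<longleftrightarrow> g (v 0) (t * n + (n - 1))"
proof -
  have "sat n J (Ex k (Conj (IsLast k (Suc k)) (G (Suc k) t k))) v
      \<longleftrightarrow> (\<exists>y<n. sat n J (IsLast k (Suc k)) (v(k := y)) \<and> g (v 0) (t * n + y))"
    by (rule sat_Ex_bits[where v = v, OF assms])
  also have "\<dots> \<longleftrightarrow> g (v 0) (t * n + (n - 1))"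
    using assms(4) by (auto simp: sat_IsLast intro!: exI[of _ "n - 1"])
  finally show ?thesis .
qed

lemma sat_Ex_IsSucc_bits:
  assumes "defines_bits n J G g" "0 < x" "x < k" "t < nblocks" "v 0 < n" "v x < n" "v x \<noteq> 0"
  shows "sat n J (Ex k (Conj (IsSucc k x (Suc k)) (G (Suc k) t k))) v \<longleftrightarrow> g (v 0) (t * n + (v x - 1))"
proof -
  have "sat n J (Ex k (Conj (IsSucc k x (Suc k)) (G (Suc k) t k))) v
      \<longleftrightarrow> (\<exists>y<n. sat n J (IsSucc k x (Suc k)) (v(k := y)) \<and> g (v 0) (t * n + y))"
    using assms(2,3) by (intro sat_Ex_bits[where v = v, OF assms(1) _ assms(4,5)]) simp
  also have "\<dots> \<longleftrightarrow> (\<exists>y<n. y = v x - 1 \<and> g (v 0) (t * n + y))"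
  proof -
    have "y + 1 = v x \<longleftrightarrow> y = v x - 1" for y
      using assms(7) by arith
    then show ?thesis
      using assms(2,3,6) by (simp add: sat_IsSucc)
  qed
  also have "\<dots> \<longleftrightarrow> g (v 0) (t * n + (v x - 1))"
    using assms(6) by auto
  finally show ?thesis .
qed

lemma defines_bits_ShiftIn:
  assumes G: "defines_bits n J G g"
  shows "defines_bits n J (ShiftIn_bits c G) (\<lambda>a. shift_in c (g a))"
  unfolding defines_bits_def
proof (intro allI impI)
  fix k t x :: nat and v :: "nat \<Rightarrow> nat"
  assume x: "0 < x" "x < k" and t: "t < nblocks" and v: "v 0 < n" "v x < n"
  have "sat n J (IsZero x k) v \<longleftrightarrow> v x = 0"
    using x v by (simp add: sat_IsZero)
  moreover have "t \<noteq> 0 \<Longrightarrow> sat n J (Ex k (Conj (IsLast k (Suc k)) (G (Suc k) (t - 1) k))) v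
      \<longleftrightarrow> g (v 0) ((t - 1) * n + (n - 1))"
    using x t v by (intro sat_Ex_IsLast_bits[OF G]) auto
  moreover have "v x \<noteq> 0 \<Longrightarrow> sat n J (Ex k (Conj (IsSucc k x (Suc k)) (G (Suc k) t k))) v
      \<longleftrightarrow> g (v 0) (t * n + (v x - 1))"
    using x t v by (rule sat_Ex_IsSucc_bits[OF G])
  ultimately show "sat n J (ShiftIn_bits c G k t x) v \<longleftrightarrow> shift_in c (g (v 0)) (t * n + v x)"
    unfolding ShiftIn_bits_def shift_in_block[OF v(2)] by simp
qed

definition Stored_bits :: "(nat \<Rightarrow> 'r) \<Rightarrow> ('c + 'r) bits_fo" where
  "Stored_bits R = (\<lambda>k t x. Rel (Inr (R t)) [x])"

lemma defines_bits_Stored: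
  "defines_bits n (interp I A) (Stored_bits R) (\<lambda>a p. [p mod n] \<in> A (R (p div n)))"
  unfolding defines_bits_def Stored_bits_def by (simp add: interp_def)

text \<open>The bits of \<open>2 ^ a\<close> times coordinate \<open>s\<close>, where \<open>a\<close> is the value of variable \<open>0\<close>: only the
  two lowest blocks can be nonzero.\<close>

definition Shifted_bits :: "'c \<Rightarrow> ('c + 'r) bits_fo" where
  "Shifted_bits s = (\<lambda>k t x.
     if t = 0 then Ex k (Conj (Rel (Inl s) [k]) (Plus 0 k x))
     else if t = 1 then Ex k (Conj (Rel (Inl s) [k]) (Overflow k x (Suc k)))
     else Const False)"

lemma defines_bits_Shifted:
  assumes S: "I s \<subseteq> {..<n}"
  shows "defines_bits n (interp I A) (Shifted_bits s) (\<lambda>a p. p \<in> (+) a ` I s)"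
  unfolding defines_bits_def
proof (intro allI impI)
  fix k t x :: nat and v :: "nat \<Rightarrow> nat"
  assume x: "0 < x" "x < k" and t: "t < nblocks" and v: "v 0 < n" "v x < n"
  have "sat n (interp I A) (Shifted_bits s k t x) v \<longleftrightarrow> (\<exists>l\<in>I s. v 0 + l = t * n + v x)"
  proof -
    consider "t = 0" | "t = 1" | "2 \<le> t"
      by linarith
    then show ?thesis
    proof cases
      case 1
      then show ?thesis
        using x S by (auto simp: Shifted_bits_def interp_def)
    next
      case 2
      have "sat n (interp I A) (Overflow k x (Suc k)) (v(k := l)) \<longleftrightarrow> v 0 + l = n + v x"
        if "l < n" for l
        using x v that by (simp add: sat_Overflow)
      then show ?thesis
        using 2 x S by (auto simp: Shifted_bits_def interp_def)
    next
      case 3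
      then have "n + n \<le> t * n"
        by (metis mult_2 mult_le_mono1)
      then show ?thesis
        using 3 v S by (auto simp: Shifted_bits_def)
    qed
  qed
  then show "sat n (interp I A) (Shifted_bits s k t x) v \<longleftrightarrow> t * n + v x \<in> (+) (v 0) ` I s"
    by (simp add: image_iff eq_commute)
qed

definition defines_pair :: "nat \<Rightarrow> ('r \<Rightarrow> nat list set) \<Rightarrow> 'r bits_fo \<times> 'r bits_fo
    \<Rightarrow> (nat \<Rightarrow> (nat \<Rightarrow> bool) \<times> (nat \<Rightarrow> bool)) \<Rightarrow> bool" where
  "defines_pair n J UV uv \<longleftrightarrow>
     defines_bits n J (fst UV) (\<lambda>a. fst (uv a)) \<and> defines_bits n J (snd UV) (\<lambda>a. snd (uv a))"

definition CarrySave_bits :: "bool \<Rightarrow> 'r bits_fo \<times> 'r bits_fo \<Rightarrow> 'r bits_fo \<Rightarrow> 'r bits_fo \<times> 'r bits_fo" where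
  "CarrySave_bits c UV W =
     (Xor3_bits (fst UV) (snd UV) W, ShiftIn_bits c (Maj3_bits (fst UV) (snd UV) W))"

lemma defines_pair_CarrySave:
  assumes "defines_pair n J UV uv" "defines_bits n J W w"
  shows "defines_pair n J (CarrySave_bits c UV W) (\<lambda>a. carry_save c (uv a) (w a))"
proof -
  have u: "defines_bits n J (fst UV) (\<lambda>a. fst (uv a))" and v: "defines_bits n J (snd UV) (\<lambda>a. snd (uv a))"
    using assms(1) by (simp_all add: defines_pair_def)
  show ?thesis
    using defines_bits_Xor3[OF u v assms(2)] defines_bits_ShiftIn[OF defines_bits_Maj3[OF u v assms(2)]]
    by (simp add: defines_pair_def CarrySave_bits_def carry_save_def)
qed

text \<open>Subtracting \<open>2 ^ a * set_num S\<close> adds its bitwise complement together with a carry-in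
  of \<open>1\<close>, which the carry-save step takes care of.\<close>

definition addend :: "nat \<Rightarrow> nat set \<Rightarrow> bool \<Rightarrow> nat \<Rightarrow> bool" where
  "addend a S pos p = (if pos then p \<in> (+) a ` S else p \<notin> (+) a ` S)"

definition set_num :: "nat set \<Rightarrow> int" where
  "set_num S = (\<Sum>k\<in>S. 2 ^ k)"

lemma bin_val_addend:
  assumes "S \<subseteq> {..<n}" "a < n" "2 * n \<le> M"
  shows "(bin_val (addend a S pos) M + of_bool (\<not> pos)) mod 2 ^ M
       = (2 ^ a * (if pos then set_num S else - set_num S)) mod 2 ^ M"
proof -
  have "finite S" "\<forall>l\<in>S. a + l < M"
    using assms finite_subset by fastforce+
  then have shifted: "bin_val (\<lambda>p. p \<in> (+) a ` S) M = 2 ^ a * set_num S"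
    by (simp add: bin_val_set_shift set_num_def)
  show ?thesis
  proof (cases pos)
    case False
    then have "bin_val (addend a S pos) M + of_bool (\<not> pos) = 2 ^ a * (- set_num S) + 1 * 2 ^ M"
      using bin_val_not[of "\<lambda>p. p \<in> (+) a ` S" M] shifted by (simp add: addend_def[abs_def])
    then show ?thesis
      using False by (simp only: mod_mult_self1) simp
  qed (simp add: addend_def[abs_def] shifted)
qed

definition Addend_bits :: "'c \<Rightarrow> bool \<Rightarrow> ('c + 'r) bits_fo" where
  "Addend_bits s pos = (if pos then Shifted_bits s else Not_bits (Shifted_bits s))"

lemma defines_bits_Addend:
  "I s \<subseteq> {..<n} \<Longrightarrow> defines_bits n (interp I A) (Addend_bits s pos) (\<lambda>a. addend a (I s) pos)"
  using defines_bits_Shifted defines_bits_Not[OF defines_bits_Shifted]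
  by (cases pos) (simp_all add: Addend_bits_def addend_def[abs_def])

definition add_chain :: "nat \<Rightarrow> ('c \<Rightarrow> nat set) \<Rightarrow> (bool \<times> 'c) list
    \<Rightarrow> (nat \<Rightarrow> bool) \<times> (nat \<Rightarrow> bool) \<Rightarrow> (nat \<Rightarrow> bool) \<times> (nat \<Rightarrow> bool)" where
  "add_chain a I ts uv = foldl (\<lambda>uv (pos, c). carry_save (\<not> pos) uv (addend a (I c) pos)) uv ts"

definition Add_chain_bits :: "(bool \<times> 'c) list \<Rightarrow> ('c + 'r) bits_fo \<times> ('c + 'r) bits_fo
    \<Rightarrow> ('c + 'r) bits_fo \<times> ('c + 'r) bits_fo" where
  "Add_chain_bits ts UV = foldl (\<lambda>UV (pos, c). CarrySave_bits (\<not> pos) UV (Addend_bits c pos)) UV ts"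

lemma defines_pair_Add_chain:
  assumes "\<forall>c. I c \<subseteq> {..<n}" "defines_pair n (interp I A) UV uv"
  shows "defines_pair n (interp I A) (Add_chain_bits ts UV) (\<lambda>a. add_chain a I ts (uv a))"
  using assms(2)
proof (induction ts arbitrary: UV uv)
  case (Cons tc ts)
  obtain pos c where tc: "tc = (pos, c)"
    by (cases tc)
  have "defines_pair n (interp I A) (CarrySave_bits (\<not> pos) UV (Addend_bits c pos))
      (\<lambda>a. carry_save (\<not> pos) (uv a) (addend a (I c) pos))"
    using assms(1) by (intro defines_pair_CarrySave[OF Cons.prems] defines_bits_Addend) blast
  from Cons.IH[OF this] show ?case
    by (simp add: tc add_chain_def Add_chain_bits_def)
qed (simp add: add_chain_def Add_chain_bits_def)

definition signed_sum :: "('c \<Rightarrow> int) \<Rightarrow> (bool \<times> 'c) list \<Rightarrow> int" where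
  "signed_sum x ts = (\<Sum>(pos, c)\<leftarrow>ts. if pos then x c else - x c)"

lemma signed_sum_Nil [simp]: "signed_sum x [] = 0"
  by (simp add: signed_sum_def)

lemma signed_sum_Cons [simp]:
  "signed_sum x ((pos, c) # ts) = (if pos then x c else - x c) + signed_sum x ts"
  by (simp add: signed_sum_def)

lemma bin_val_add_chain:
  assumes "\<forall>c. I c \<subseteq> {..<n}" "a < n" "2 * n \<le> M"
  shows "(bin_val (fst (add_chain a I ts uv)) M + bin_val (snd (add_chain a I ts uv)) M) mod 2 ^ M
     = (bin_val (fst uv) M + bin_val (snd uv) M + 2 ^ a * signed_sum (\<lambda>c. set_num (I c)) ts) mod 2 ^ M"
proof (induction ts arbitrary: uv)
  case (Cons tc ts)
  obtain pos c where tc: "tc = (pos, c)"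
    by (cases tc)
  let ?w = "addend a (I c) pos"
  let ?uv = "carry_save (\<not> pos) uv ?w"
  let ?rest = "2 ^ a * signed_sum (\<lambda>c. set_num (I c)) ts"
  have M: "0 < M"
    using assms by linarith
  have "(bin_val (fst (add_chain a I (tc # ts) uv)) M + bin_val (snd (add_chain a I (tc # ts) uv)) M)
      mod 2 ^ M = (bin_val (fst ?uv) M + bin_val (snd ?uv) M + ?rest) mod 2 ^ M"
    using Cons.IH[of ?uv] by (simp add: tc add_chain_def)
  also have "\<dots> = (bin_val (fst uv) M + bin_val (snd uv) M + (bin_val ?w M + of_bool (\<not> pos)) + ?rest)
      mod 2 ^ M"
    using mod_add_cong[OF bin_val_carry_save[OF M, of "\<not> pos" uv ?w], of ?rest ?rest]
    by (simp add: algebra_simps)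
  also have "\<dots> = (bin_val (fst uv) M + bin_val (snd uv) M
      + 2 ^ a * (if pos then set_num (I c) else - set_num (I c)) + ?rest) mod 2 ^ M"
  proof -
    have "(bin_val ?w M + of_bool (\<not> pos)) mod 2 ^ M
        = (2 ^ a * (if pos then set_num (I c) else - set_num (I c))) mod 2 ^ M"
      using assms by (intro bin_val_addend) auto
    then show ?thesis
      by (rule mod_add_cong[OF mod_add_cong[OF refl] refl])
  qed
  finally show ?case
    by (simp add: tc algebra_simps)
qed (simp add: add_chain_def)

section \<open>Testing a carry-save pair for zero\<close>

lemma less_mult_block:
  assumes "t < N" "y < n"
  shows "t * n + y < N * (n::nat)"
proof -
  have "Suc t * n \<le> N * n"
    using assms(1) by (intro mult_le_mono1) simp
  then show ?thesis
    using assms(2) by simp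
qed

lemma all_less_mult_iff: "(\<forall>q < N * n. P q) \<longleftrightarrow> (\<forall>t<N. \<forall>y<n. P (t * n + (y::nat)))"
proof
  assume all: "\<forall>t<N. \<forall>y<n. P (t * n + y)"
  show "\<forall>q < N * n. P q"
  proof (intro allI impI)
    fix q
    assume q: "q < N * n"
    then have "0 < n"
      by (cases n) auto
    with q have "q div n < N" "q mod n < n"
      by (simp_all add: div_less_iff_less_mult mult.commute)
    with all have "P (q div n * n + q mod n)"
      by blast
    then show "P q"
      by simp
  qed
qed (use less_mult_block in blast)

lemma ex_less_block_iff:
  assumes "y < (n::nat)"
  shows "(\<exists>r < t * n + y. Q r) \<longleftrightarrow> (\<exists>t'<t. \<exists>y'<n. Q (t' * n + y')) \<or> (\<exists>y'<y. Q (t * n + y'))"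
proof
  assume "\<exists>r < t * n + y. Q r"
  then obtain r where r: "r < t * n + y" "Q r"
    by blast
  have r_eq: "r div n * n + r mod n = r" and r_mod: "r mod n < n"
    using assms by simp_all
  show "(\<exists>t'<t. \<exists>y'<n. Q (t' * n + y')) \<or> (\<exists>y'<y. Q (t * n + y'))"
  proof (cases "r div n < t")
    case True
    then show ?thesis
      using r r_eq r_mod by metis
  next
    case False
    have "r div n < Suc t"
      using r assms by (simp add: div_less_iff_less_mult)
    with False have "r div n = t"
      by simp
    with r r_eq have "r mod n < y" "Q (t * n + r mod n)"
      by auto
    then show ?thesis
      by blast
  qed
next
  assume "(\<exists>t'<t. \<exists>y'<n. Q (t' * n + y')) \<or> (\<exists>y'<y. Q (t * n + y'))"
  then show "\<exists>r < t * n + y. Q r"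
  proof (elim disjE exE conjE)
    fix t' y'
    assume "t' < t" "y' < n" "Q (t' * n + y')"
    moreover have "t' * n + y' < t * n + y"
      using less_mult_block[OF \<open>t' < t\<close> \<open>y' < n\<close>] by linarith
    ultimately show ?thesis
      by blast
  qed (metis add_less_cancel_left)
qed

definition Below_bits :: "'r bits_fo \<times> 'r bits_fo \<Rightarrow> nat \<Rightarrow> nat \<Rightarrow> 'r fo" where
  "Below_bits UV k t =
     (let Bit = (\<lambda>t'. Disj (fst UV (Suc (Suc k)) t' (Suc k)) (snd UV (Suc (Suc k)) t' (Suc k)))
      in Disj (Disjs (map (\<lambda>t'. Ex (Suc k) (Bit t')) [0..<t]))
              (Ex (Suc k) (Conj (Less (Suc k) k) (Bit t))))"

lemma sat_Below_bits:
  assumes UV: "defines_pair n J UV uv" and "0 < k" "t < nblocks" "w 0 < n" "w k < n"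
  shows "sat n J (Below_bits UV k t) w \<longleftrightarrow> (\<exists>r < t * n + w k. fst (uv (w 0)) r \<or> snd (uv (w 0)) r)"
proof -
  have U: "defines_bits n J (fst UV) (\<lambda>a. fst (uv a))" and V: "defines_bits n J (snd UV) (\<lambda>a. snd (uv a))"
    using UV by (simp_all add: defines_pair_def)
  let ?B = "\<lambda>p. fst (uv (w 0)) p \<or> snd (uv (w 0)) p"
  have bits: "sat n J (fst UV (Suc (Suc k)) t' (Suc k)) (w(Suc k := y)) \<longleftrightarrow> fst (uv (w 0)) (t' * n + y)"
    "sat n J (snd UV (Suc (Suc k)) t' (Suc k)) (w(Suc k := y)) \<longleftrightarrow> snd (uv (w 0)) (t' * n + y)"
    if "t' < nblocks" "y < n" for t' y
    using defines_bits_upd[OF U, of "Suc k" "Suc (Suc k)" t' w y]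
      defines_bits_upd[OF V, of "Suc k" "Suc (Suc k)" t' w y] that assms(4)
    by simp_all
  have "sat n J (Below_bits UV k t) w \<longleftrightarrow>
      (\<exists>t'<t. \<exists>y<n. ?B (t' * n + y)) \<or> (\<exists>y < w k. ?B (t * n + y))"
    using assms(2-5) by (auto simp: Below_bits_def bits)
  also have "\<dots> \<longleftrightarrow> (\<exists>r < t * n + w k. ?B r)"
    using assms(5) by (rule ex_less_block_iff[symmetric])
  finally show ?thesis .
qed

definition Zero_test :: "'r bits_fo \<times> 'r bits_fo \<Rightarrow> nat \<Rightarrow> 'r fo" where
  "Zero_test UV k = Conjs (map (\<lambda>t. Neg (Ex k
     (Xor (Xor (fst UV (Suc k) t k) (snd UV (Suc k) t k)) (Below_bits UV k t)))) [0..<nblocks])"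

lemma sat_Zero_test:
  assumes UV: "defines_pair n J UV uv" and k: "0 < k" and w: "w 0 < n"
  shows "sat n J (Zero_test UV k) w \<longleftrightarrow> carry_pattern (fst (uv (w 0))) (snd (uv (w 0))) (nblocks * n)"
proof -
  have U: "defines_bits n J (fst UV) (\<lambda>a. fst (uv a))" and V: "defines_bits n J (snd UV) (\<lambda>a. snd (uv a))"
    using UV by (simp_all add: defines_pair_def)
  let ?u = "fst (uv (w 0))" and ?v = "snd (uv (w 0))"
  have bits: "sat n J (fst UV (Suc k) t k) (w(k := y)) \<longleftrightarrow> ?u (t * n + y)"
    "sat n J (snd UV (Suc k) t k) (w(k := y)) \<longleftrightarrow> ?v (t * n + y)"
    "sat n J (Below_bits UV k t) (w(k := y)) \<longleftrightarrow> (\<exists>r < t * n + y. ?u r \<or> ?v r)"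
    if "t < nblocks" "y < n" for t y
    using defines_bits_upd[OF U, of k "Suc k" t w y] defines_bits_upd[OF V, of k "Suc k" t w y]
      sat_Below_bits[OF UV k that(1), of "w(k := y)"] that k w
    by simp_all
  have "sat n J (Zero_test UV k) w \<longleftrightarrow> (\<forall>t<nblocks. \<forall>y<n.
      \<not> sat n J (Xor (Xor (fst UV (Suc k) t k) (snd UV (Suc k) t k)) (Below_bits UV k t)) (w(k := y)))"
    by (auto simp: Zero_test_def simp del: sat_Xor)
  also have "\<dots> \<longleftrightarrow>
      (\<forall>t<nblocks. \<forall>y<n. (?u (t * n + y) \<noteq> ?v (t * n + y)) \<longleftrightarrow> (\<exists>r < t * n + y. ?u r \<or> ?v r))"
    by (simp add: bits)
  also have "\<dots> \<longleftrightarrow> carry_pattern ?u ?v (nblocks * n)"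
    unfolding carry_pattern_def by (rule all_less_mult_iff[symmetric])
  finally show ?thesis .
qed

section \<open>Minors and collinearity\<close>

definition quad_val :: "('c \<Rightarrow> int) \<Rightarrow> (bool \<times> 'c \<times> 'c) list \<Rightarrow> int" where
  "quad_val x ms = signed_sum (\<lambda>(c1, c2). x c1 * x c2) ms"

definition partial_terms :: "'c \<Rightarrow> (bool \<times> 'c \<times> 'c) list \<Rightarrow> (bool \<times> 'c) list" where
  "partial_terms s ms = concat (map (\<lambda>(pos, c1, c2).
     (if c1 = s then [(pos, c2)] else []) @ (if c2 = s then [(pos, c1)] else [])) ms)"

lemma quad_val_update:
  assumes "\<forall>(pos, c1, c2)\<in>set ms. c1 \<noteq> c2"
  shows "quad_val (x(s := x s + \<delta>)) ms = quad_val x ms + \<delta> * signed_sum x (partial_terms s ms)"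
  using assms
proof (induction ms)
  case (Cons m ms)
  obtain pos c1 c2 where m: "m = (pos, c1, c2)"
    by (cases m)
  with Cons.prems have "c1 \<noteq> c2"
    by simp
  with Cons show ?case
    by (cases "c1 = s"; cases "c2 = s")
      (auto simp: m quad_val_def partial_terms_def signed_sum_def algebra_simps)
qed (simp add: quad_val_def partial_terms_def)

lemma signed_sum_map_neg: "signed_sum x (map (apfst Not) ts) = - signed_sum x ts"
  by (induction ts) auto

text \<open>The expansion of the minor \<open>(p2_i - p1_i) (p3_j - p1_j) - (p2_j - p1_j) (p3_i - p1_i)\<close>.
  Every monomial multiplies coordinates of two different points, so changing one coordinate
  changes the minor by a linear form in the other coordinates.\<close>

definition minor_monomials :: "'d \<Rightarrow> 'd \<Rightarrow> (bool \<times> (pt \<times> 'd) \<times> (pt \<times> 'd)) list" where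
  "minor_monomials i j =
     [(True, (P2, i), (P3, j)), (True, (P1, j), (P3, i)), (True, (P2, j), (P1, i)),
      (False, (P2, j), (P3, i)), (False, (P2, i), (P1, j)), (False, (P1, i), (P3, j))]"

lemma minor_monomials_distinct: "\<forall>(pos, c1, c2)\<in>set (minor_monomials i j). c1 \<noteq> c2"
  by (simp add: minor_monomials_def)

lemma parallel_iff_minors:
  fixes e f :: "real ^ 'n"
  shows "(e = 0 \<or> f = 0 \<or> (\<exists>c. f = c *\<^sub>R e)) \<longleftrightarrow> (\<forall>i j. e $ i * f $ j = e $ j * f $ i)"
proof
  assume minors: "\<forall>i j. e $ i * f $ j = e $ j * f $ i"
  show "e = 0 \<or> f = 0 \<or> (\<exists>c. f = c *\<^sub>R e)"
  proof (cases "e = 0")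
    case False
    then obtain i where i: "e $ i \<noteq> 0"
      by (auto simp: vec_eq_iff)
    have "f = (f $ i / e $ i) *\<^sub>R e"
      unfolding vec_eq_iff
    proof
      fix j
      show "f $ j = ((f $ i / e $ i) *\<^sub>R e) $ j"
        using minors[rule_format, of i j] i by (simp add: field_simps)
    qed
    then show ?thesis
      by blast
  qed simp
qed auto

lemma collinear_iff_minors:
  fixes A B C :: "real ^ 'n"
  shows "collinear {A, B, C} \<longleftrightarrow> (\<forall>i j. (B - A) $ i * (C - A) $ j = (B - A) $ j * (C - A) $ i)"
proof -
  have "collinear {A, B, C} \<longleftrightarrow> collinear {B, A, C}"
    by (simp add: insert_commute)
  also have "\<dots> \<longleftrightarrow> collinear {0, B - A, C - A}"
    by (rule collinear_3) (simp add: NO_MATCH_def)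
  also have "\<dots> \<longleftrightarrow> (\<forall>i j. (B - A) $ i * (C - A) $ j = (B - A) $ j * (C - A) $ i)"
    unfolding collinear_lemma by (rule parallel_iff_minors)
  finally show ?thesis .
qed

lemma set_num_eq_coord: "set_num (I (p, j)) = int (coord I p j)"
  by (simp add: set_num_def coord_def)

lemma collinear_query_iff_minors:
  "collinear_query n I \<longleftrightarrow> (\<forall>i j. quad_val (\<lambda>c. set_num (I c)) (minor_monomials i j) = 0)"
proof -
  have point: "point I p $ i = of_int (set_num (I (p, i)))" for p i
    by (simp add: point_def set_num_eq_coord)
  have "of_int (quad_val (\<lambda>c. set_num (I c)) (minor_monomials i j)) =
      (point I P2 - point I P1) $ i * (point I P3 - point I P1) $ j
      - (point I P2 - point I P1) $ j * (point I P3 - point I P1) $ i" for i j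
    by (simp add: quad_val_def minor_monomials_def point algebra_simps)
  then show ?thesis
    unfolding collinear_query_def collinear_iff_minors
    by (metis (no_types, lifting) eq_iff_diff_eq_0 of_int_eq_0_iff)
qed

lemma set_num_bounds:
  assumes "S \<subseteq> {..<n}"
  shows "0 \<le> set_num S" "set_num S < 2 ^ n"
  using bin_val_set[OF assms] bin_val_nonneg[of _ n] bin_val_less[of _ n]
  by (metis set_num_def)+

lemma abs_minor_less:
  assumes S: "\<forall>c. I c \<subseteq> {..<n}" and n: "0 < n"
  shows "\<bar>quad_val (\<lambda>c. set_num (I c)) (minor_monomials i j)\<bar> < 2 ^ (nblocks * n)"
proof -
  let ?B = "(2::int) ^ n"
  have prod: "0 \<le> set_num (I c1) * set_num (I c2)" "set_num (I c1) * set_num (I c2) < ?B * ?B" for c1 c2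
    using set_num_bounds[OF S[rule_format, of c1]] set_num_bounds[OF S[rule_format, of c2]]
    by (simp_all add: mult_strict_mono)
  have "\<bar>quad_val (\<lambda>c. set_num (I c)) (minor_monomials i j)\<bar> < 3 * (?B * ?B)"
    using prod[of "(P2, i)" "(P3, j)"] prod[of "(P1, j)" "(P3, i)"] prod[of "(P2, j)" "(P1, i)"]
      prod[of "(P2, j)" "(P3, i)"] prod[of "(P2, i)" "(P1, j)"] prod[of "(P1, i)" "(P3, j)"]
    by (simp add: quad_val_def minor_monomials_def abs_less_iff)
  also have "\<dots> \<le> 2 ^ (3 * n) * (?B * ?B)"
  proof -
    have "(2::int) ^ 3 \<le> 2 ^ (3 * n)"
      using n by (intro power_increasing) auto
    then show ?thesis
      by simp
  qed
  also have "\<dots> = 2 ^ (nblocks * n)"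
    by (simp add: nblocks_def power_add[symmetric] algebra_simps)
  finally show ?thesis .
qed

section \<open>The dynamic program\<close>

text \<open>Register \<open>(w, t, i, j)\<close> holds block \<open>t\<close> of the first (\<open>w\<close>) or second (\<open>\<not> w\<close>) summand of
  the redundant representation of minor \<open>(i, j)\<close>; it is the unary auxiliary relation with symbol
  \<open>Suc (reg_index (w, t, i, j))\<close>, symbol \<open>0\<close> being the query relation.\<close>

definition registers :: "(bool \<times> nat \<times> 'd \<times> 'd) set" where
  "registers = UNIV \<times> {..<nblocks} \<times> UNIV"

definition reg_index :: "bool \<times> nat \<times> 'd::finite \<times> 'd \<Rightarrow> nat" where
  "reg_index = (SOME h. bij_betw h registers {0..<card (registers :: (bool \<times> nat \<times> 'd \<times> 'd) set)})"

lemma bij_reg_index: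
  "bij_betw (reg_index :: bool \<times> nat \<times> 'd::finite \<times> 'd \<Rightarrow> nat) registers
     {0..<card (registers :: (bool \<times> nat \<times> 'd \<times> 'd) set)}"
proof -
  let ?R = "registers :: (bool \<times> nat \<times> 'd \<times> 'd) set"
  have "finite ?R"
    by (simp add: registers_def)
  then have "\<exists>h. bij_betw h ?R {0..<card ?R}"
    by (rule ex_bij_betw_finite_nat)
  then show ?thesis
    unfolding reg_index_def by (rule someI_ex)
qed

definition stored :: "nat \<Rightarrow> aux \<Rightarrow> bool \<Rightarrow> 'd::finite \<Rightarrow> 'd \<Rightarrow> nat \<Rightarrow> bool" where
  "stored n A w i j p \<longleftrightarrow> [p mod n] \<in> A (Suc (reg_index (w, p div n, i, j)))"

definition Stored_pair :: "'d::finite \<Rightarrow> 'd \<Rightarrow> (pt \<times> 'd + nat) bits_fo \<times> (pt \<times> 'd + nat) bits_fo" where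
  "Stored_pair i j = (Stored_bits (\<lambda>t. Suc (reg_index (True, t, i, j))),
                      Stored_bits (\<lambda>t. Suc (reg_index (False, t, i, j))))"

lemma defines_pair_Stored:
  "defines_pair n (interp I A) (Stored_pair i j) (\<lambda>a. (stored n A True i j, stored n A False i j))"
  using defines_bits_Stored[of n I A "\<lambda>t. Suc (reg_index (True, t, i, j))"]
    defines_bits_Stored[of n I A "\<lambda>t. Suc (reg_index (False, t, i, j))"]
  by (simp add: defines_pair_def Stored_pair_def stored_def[abs_def])

text \<open>Flipping bit \<open>a\<close> of coordinate \<open>s\<close> adds \<open>\<plusminus>2 ^ a\<close> to it, with the minus sign iff the bit is
  currently set.\<close>

definition minor_addends :: "bool \<Rightarrow> pt \<times> 'd \<Rightarrow> 'd \<Rightarrow> 'd \<Rightarrow> (bool \<times> pt \<times> 'd) list" where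
  "minor_addends del s i j =
     (let ts = partial_terms s (minor_monomials i j) in if del then map (apfst Not) ts else ts)"

definition updated_pair ::
    "nat \<Rightarrow> 'd::finite input \<Rightarrow> aux \<Rightarrow> pt \<times> 'd \<Rightarrow> nat \<Rightarrow> 'd \<Rightarrow> 'd \<Rightarrow> (nat \<Rightarrow> bool) \<times> (nat \<Rightarrow> bool)" where
  "updated_pair n I A s a i j =
     add_chain a I (minor_addends (a \<in> I s) s i j) (stored n A True i j, stored n A False i j)"

definition Updated_pair :: "pt \<times> 'd::finite \<Rightarrow> 'd \<Rightarrow> 'd \<Rightarrow> (pt \<times> 'd + nat) bits_fo \<times> (pt \<times> 'd + nat) bits_fo" where
  "Updated_pair s i j =
     (let C = (\<lambda>del. Add_chain_bits (minor_addends del s i j) (Stored_pair i j))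
      in (Ite_bits (Rel (Inl s) [0]) (fst (C True)) (fst (C False)),
          Ite_bits (Rel (Inl s) [0]) (snd (C True)) (snd (C False))))"

lemma defines_pair_Updated:
  assumes "\<forall>c. I c \<subseteq> {..<n}"
  shows "defines_pair n (interp I A) (Updated_pair s i j) (\<lambda>a. updated_pair n I A s a i j)"
proof -
  let ?C = "\<lambda>del. Add_chain_bits (minor_addends del s i j) (Stored_pair i j)"
  let ?c = "\<lambda>del a. add_chain a I (minor_addends del s i j) (stored n A True i j, stored n A False i j)"
  have chain: "defines_bits n (interp I A) (fst (?C del)) (\<lambda>a. fst (?c del a))"
    "defines_bits n (interp I A) (snd (?C del)) (\<lambda>a. snd (?c del a))" for del
    using defines_pair_Add_chain[OF assms defines_pair_Stored] by (simp_all add: defines_pair_def)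
  have bit: "sat n (interp I A) (Rel (Inl s) [0]) v \<longleftrightarrow> v 0 \<in> I s" for v
    by (auto simp: interp_def)
  have "defines_bits n (interp I A) (Ite_bits (Rel (Inl s) [0]) (fst (?C True)) (fst (?C False)))
      (\<lambda>a p. if a \<in> I s then fst (?c True a) p else fst (?c False a) p)"
    "defines_bits n (interp I A) (Ite_bits (Rel (Inl s) [0]) (snd (?C True)) (snd (?C False)))
      (\<lambda>a p. if a \<in> I s then snd (?c True a) p else snd (?c False a) p)"
    by (rule defines_bits_Ite[OF bit chain(1) chain(1)], rule defines_bits_Ite[OF bit chain(2) chain(2)])
  moreover have "(\<lambda>a p. if a \<in> I s then fst (?c True a) p else fst (?c False a) p)
      = (\<lambda>a. fst (updated_pair n I A s a i j))"
    "(\<lambda>a p. if a \<in> I s then snd (?c True a) p else snd (?c False a) p)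
      = (\<lambda>a. snd (updated_pair n I A s a i j))"
    by (auto simp: fun_eq_iff updated_pair_def)
  ultimately show ?thesis
    by (simp add: defines_pair_def Updated_pair_def)
qed

lemma set_num_flip:
  assumes "finite (I s)"
  shows "(\<lambda>c. set_num (flip I (s, a) c))
       = (\<lambda>c. set_num (I c))(s := set_num (I s) + (if a \<in> I s then - (2 ^ a) else 2 ^ a))"
  using assms by (auto simp: flip_def set_num_def sum_diff1)

lemma updated_pair_value:
  assumes S: "\<forall>c. I c \<subseteq> {..<n}" and a: "a < n"
    and stored: "(bin_val (stored n A True i j) (nblocks * n) + bin_val (stored n A False i j) (nblocks * n))
        mod 2 ^ (nblocks * n) = quad_val (\<lambda>c. set_num (I c)) (minor_monomials i j) mod 2 ^ (nblocks * n)"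
  shows "(bin_val (fst (updated_pair n I A s a i j)) (nblocks * n)
        + bin_val (snd (updated_pair n I A s a i j)) (nblocks * n)) mod 2 ^ (nblocks * n)
       = quad_val (\<lambda>c. set_num (flip I (s, a) c)) (minor_monomials i j) mod 2 ^ (nblocks * n)"
proof -
  let ?M = "nblocks * n" and ?x = "\<lambda>c. set_num (I c)"
  define \<delta> :: int where "\<delta> = (if a \<in> I s then - (2 ^ a) else 2 ^ a)"
  define T where "T = signed_sum ?x (partial_terms s (minor_monomials i j))"
  have M: "2 * n \<le> ?M"
    by (simp add: nblocks_def)
  have "2 ^ a * signed_sum ?x (minor_addends (a \<in> I s) s i j) = \<delta> * T"
    by (simp add: minor_addends_def \<delta>_def T_def Let_def signed_sum_map_neg)
  then have "(bin_val (fst (updated_pair n I A s a i j)) ?M + bin_val (snd (updated_pair n I A s a i j)) ?M)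
      mod 2 ^ ?M = (bin_val (stored n A True i j) ?M + bin_val (stored n A False i j) ?M + \<delta> * T) mod 2 ^ ?M"
    using bin_val_add_chain[OF S a M] by (simp add: updated_pair_def)
  also have "\<dots> = (quad_val ?x (minor_monomials i j) + \<delta> * T) mod 2 ^ ?M"
    by (rule mod_add_cong[OF stored refl])
  also have "quad_val ?x (minor_monomials i j) + \<delta> * T
      = quad_val (\<lambda>c. set_num (flip I (s, a) c)) (minor_monomials i j)"
  proof -
    have "finite (I s)"
      using S finite_subset by blast
    then have "(\<lambda>c. set_num (flip I (s, a) c)) = ?x(s := ?x s + \<delta>)"
      by (simp add: set_num_flip \<delta>_def)
    then show ?thesis
      using quad_val_update[OF minor_monomials_distinct, where x = ?x and s = s and \<delta> = \<delta>]
      by (simp add: T_def)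
  qed
  finally show ?thesis .
qed

definition coordinate_pairs :: "('d::finite \<times> 'd) list" where
  "coordinate_pairs = (SOME xs. set xs = UNIV)"

lemma set_coordinate_pairs: "set (coordinate_pairs :: ('d::finite \<times> 'd) list) = UNIV"
  unfolding coordinate_pairs_def by (rule someI_ex[OF finite_list]) simp

text \<open>The update formulas only see the structure before the change, so the query tests the
  updated pairs rather than the stored ones.\<close>

definition Query :: "pt \<times> 'd::finite \<Rightarrow> (pt \<times> 'd + nat) fo" where
  "Query s = Conjs (map (\<lambda>(i, j). Zero_test (Updated_pair s i j) 1) coordinate_pairs)"

text \<open>Variable \<open>0\<close> holds the changed bit and variable \<open>1\<close> the position within a block, so the
  formulas may quantify over the variables from \<open>2\<close> on.\<close>

definition Update :: "pt \<times> 'd::finite \<Rightarrow> nat \<Rightarrow> (pt \<times> 'd + nat) fo" where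
  "Update s r = (if r = 0 then Query s else
     (case inv_into registers reg_index (r - 1) of (w, t, i, j) \<Rightarrow>
        (if w then fst else snd) (Updated_pair s i j) 2 t 1))"

definition collinearity_prog :: "'d::finite dynprog" where
  "collinearity_prog =
     \<lparr>naux = Suc (card (registers :: (bool \<times> nat \<times> 'd \<times> 'd) set)),
      arity = (\<lambda>r. if r = 0 then 0 else 1), upd = Update\<rparr>"

lemma wf_collinearity_prog: "wf_prog (collinearity_prog :: 'd::finite dynprog)"
  by (simp add: wf_prog_def collinearity_prog_def)

lemma stored_step:
  fixes I :: "'d::finite input"
  assumes S: "\<forall>c. I c \<subseteq> {..<n}" and a: "a < n" and p: "p < nblocks * n"
  shows "stored n (snd (step n collinearity_prog (I, A) (s, a))) w i j p
     \<longleftrightarrow> (if w then fst else snd) (updated_pair n I A s a i j) p"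
proof -
  let ?r = "(w, p div n, i, j)" and ?v = "env a [p mod n]"
  have n: "0 < n"
    using a by simp
  have t: "p div n < nblocks"
    using p n by (simp add: div_less_iff_less_mult mult.commute)
  then have r: "?r \<in> registers"
    by (simp add: registers_def)
  then have idx: "reg_index ?r < card (registers :: (bool \<times> nat \<times> 'd \<times> 'd) set)"
    and dec: "inv_into registers reg_index (reg_index ?r) = ?r"
    using bij_reg_index[where 'd = 'd] bij_betw_inv_into_left by (fastforce simp: bij_betw_def)+
  have "stored n (snd (step n collinearity_prog (I, A) (s, a))) w i j p
      \<longleftrightarrow> sat n (interp I A) ((if w then fst else snd) (Updated_pair s i j) 2 (p div n) 1) ?v"
    using n idx dec by (simp add: stored_def step_def collinearity_prog_def Update_def)
  also have "\<dots> \<longleftrightarrow> (if w then fst else snd) (updated_pair n I A s a i j) (p div n * n + p mod n)"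
  proof -
    have U: "defines_bits n (interp I A) (fst (Updated_pair s i j)) (\<lambda>a. fst (updated_pair n I A s a i j))"
      and V: "defines_bits n (interp I A) (snd (Updated_pair s i j)) (\<lambda>a. snd (updated_pair n I A s a i j))"
      using defines_pair_Updated[OF S] by (simp_all add: defines_pair_def)
    have "?v 0 = a" "?v 1 = p mod n"
      by (simp_all add: env_def)
    then show ?thesis
      using defines_bitsD[OF U, of 1 2 "p div n" ?v] defines_bitsD[OF V, of 1 2 "p div n" ?v] t n a
      by simp
  qed
  finally show ?thesis
    by simp
qed

lemma query_step:
  fixes I :: "'d::finite input"
  assumes S: "\<forall>c. I c \<subseteq> {..<n}" and a: "a < n"
  shows "[] \<in> snd (step n collinearity_prog (I, A) (s, a)) 0
     \<longleftrightarrow> (\<forall>i j. carry_pattern (fst (updated_pair n I A s a i j)) (snd (updated_pair n I A s a i j))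
                               (nblocks * n))"
proof -
  have "[] \<in> snd (step n collinearity_prog (I, A) (s, a)) 0 \<longleftrightarrow> sat n (interp I A) (Query s) (env a [])"
    by (simp add: step_def collinearity_prog_def Update_def)
  then show ?thesis
    using sat_Zero_test[OF defines_pair_Updated[OF S], of 1 "env a []"] a
    by (simp add: Query_def set_coordinate_pairs env_def)
qed

definition minors_stored :: "nat \<Rightarrow> 'd::finite input \<Rightarrow> aux \<Rightarrow> bool" where
  "minors_stored n I A \<longleftrightarrow> (\<forall>c. I c \<subseteq> {..<n}) \<and> (\<forall>i j.
     (bin_val (stored n A True i j) (nblocks * n) + bin_val (stored n A False i j) (nblocks * n))
       mod 2 ^ (nblocks * n) = quad_val (\<lambda>c. set_num (I c)) (minor_monomials i j) mod 2 ^ (nblocks * n))"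

lemma step_correct:
  fixes I :: "'d::finite input" and s :: "pt \<times> 'd"
  assumes inv: "minors_stored n I A" and a: "a < n"
  defines "st \<equiv> step n collinearity_prog (I, A) (s, a)"
  shows "minors_stored n (fst st) (snd st)"
    and "[] \<in> snd st 0 \<longleftrightarrow> collinear_query n (fst st)"
proof -
  let ?M = "nblocks * n" and ?upd = "updated_pair n I A s a"
  have S: "\<forall>c. I c \<subseteq> {..<n}"
    using inv by (simp add: minors_stored_def)
  have S': "\<forall>c. fst st c \<subseteq> {..<n}"
    using S a by (auto simp: st_def step_def flip_def)
  have minor_value: "(bin_val (fst (?upd i j)) ?M + bin_val (snd (?upd i j)) ?M) mod 2 ^ ?M
      = quad_val (\<lambda>c. set_num (fst st c)) (minor_monomials i j) mod 2 ^ ?M" for i j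
    using updated_pair_value[OF S a] inv by (simp add: minors_stored_def st_def step_def)
  have "bin_val (stored n (snd st) w i j) ?M = bin_val ((if w then fst else snd) (?upd i j)) ?M" for w i j
    using stored_step[OF S a] by (intro bin_val_cong) (simp add: st_def)
  with minor_value S' show "minors_stored n (fst st) (snd st)"
    by (simp add: minors_stored_def)
  have "[] \<in> snd st 0 \<longleftrightarrow> (\<forall>i j. 2 ^ ?M dvd bin_val (fst (?upd i j)) ?M + bin_val (snd (?upd i j)) ?M)"
    using query_step[OF S a] by (simp add: st_def two_pow_dvd_bin_val_add_iff)
  also have "\<dots> \<longleftrightarrow> (\<forall>i j. quad_val (\<lambda>c. set_num (fst st c)) (minor_monomials i j) = 0)"
    using dvd_iff_zero_if_mod_eq[OF minor_value abs_minor_less[OF S']] a by simp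
  also have "\<dots> \<longleftrightarrow> collinear_query n (fst st)"
    by (rule collinear_query_iff_minors[symmetric])
  finally show "[] \<in> snd st 0 \<longleftrightarrow> collinear_query n (fst st)" .
qed

lemma minors_stored_run:
  "\<forall>c\<in>set cs. snd c < n \<Longrightarrow>
   minors_stored n (fst (run n (collinearity_prog :: 'd::finite dynprog) cs))
     (snd (run n (collinearity_prog :: 'd dynprog) cs))"
proof (induction cs rule: rev_induct)
  case Nil
  have "stored n (\<lambda>_. {}) w i j = (\<lambda>p. False)" for w and i j :: 'd
    by (simp add: stored_def[abs_def])
  then show ?case
    by (simp add: run_def minors_stored_def quad_val_def minor_monomials_def set_num_def)
next
  case (snoc c cs)
  obtain I A where run: "run n collinearity_prog cs = (I, A)"
    by fastforce
  obtain s a where c: "c = (s, a)"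
    by fastforce
  have "minors_stored n I A" "a < n"
    using snoc run c by simp_all
  then show ?case
    using step_correct(1)[of n I A a s] run by (simp add: c run_def)
qed

theorem lemma14:
  shows "in_DynFO_ar (collinear_query :: nat \<Rightarrow> 'd::finite input \<Rightarrow> bool)"
  unfolding in_DynFO_ar_def
proof (intro exI conjI)
  show "wf_prog (collinearity_prog :: 'd dynprog)"
    by (rule wf_collinearity_prog)
  show "maintains (collinearity_prog :: 'd dynprog) collinear_query"
    unfolding maintains_def
  proof (intro allI impI)
    fix n and cs :: "'d change list"
    assume cs: "cs \<noteq> [] \<and> (\<forall>c\<in>set cs. snd c < n)"
    then obtain cs' s a where cs_eq: "cs = cs' @ [(s, a)]"
      by (metis prod.exhaust rev_exhaust)
    obtain I A where run: "run n collinearity_prog cs' = (I, A)"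
      by fastforce
    have "minors_stored n I A"
      using minors_stored_run[of cs' n] cs run by (simp add: cs_eq)
    moreover have "a < n"
      using cs by (simp add: cs_eq)
    ultimately show "[] \<in> snd (run n collinearity_prog cs) 0
        \<longleftrightarrow> collinear_query n (fst (run n collinearity_prog cs))"
      using step_correct(2) by (simp add: cs_eq run_def run[unfolded run_def])
  qed
qed

end
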